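(* Let $D_\infty=\langle s,t\mid t^2,\ tsts\rangle$. If $\alpha:D_\infty\curvearrowright X$ is a minimal continuous action on an infinite compact Hausdorff space $X$, then $\alpha$ is topologically free, i.e. for every $g\ne e$ in $D_\infty$ the set $\{x\in X: gx\ne x\}$ is dense in $X$. *)

theory Defs
  imports "HOL-Analysis.Analysis" "HOL-Algebra.Group_Action"
begin

text \<open>Concrete model of the infinite dihedral group
  D_inf = < s, t | t^2, tsts >: the element (n, False) is s^n and (n, True) is s^n t.\<close>

definition Dinf :: "(int \<times> bool) monoid" where
  "Dinf = \<lparr>carrier = UNIV,
           mult = (\<lambda>(n, a) (m, b). (n + (if a then - m else m), a \<noteq> b)),
           one = (0, False)\<rparr>"

definition Dinf_s :: "int \<times> bool" where "Dinf_s = (1, False)"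
definition Dinf_t :: "int \<times> bool" where "Dinf_t = (0, True)"

lemma Dinf_relations:
  "Dinf_t \<otimes>\<^bsub>Dinf\<^esub> Dinf_t = \<one>\<^bsub>Dinf\<^esub>"
  "Dinf_t \<otimes>\<^bsub>Dinf\<^esub> Dinf_s \<otimes>\<^bsub>Dinf\<^esub> Dinf_t \<otimes>\<^bsub>Dinf\<^esub> Dinf_s = \<one>\<^bsub>Dinf\<^esub>"
  by (simp_all add: Dinf_def Dinf_s_def Dinf_t_def)

lemma Dinf_group: "group Dinf"
  unfolding Dinf_def
  apply (rule groupI)
      apply (auto simp: algebra_simps)
  subgoal for a b by (rule exI[of _ "if b then a else - a"]) auto
  done

end

theory Submission
  imports Defs
begin

text \<open>A rotation \<open>s\<^sup>n\<close> has only the conjugates \<open>s\<^sup>n\<close> and \<open>s\<^sup>-\<^sup>n\<close>, so the set of points it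
  fixes is invariant; if that set contains a nonempty open set, minimality makes it everything,
  every orbit is then finite, and so is the space. Suppose a reflection \<open>s\<^sup>n t\<close> fixed a nonempty
  open set \<open>U\<close> pointwise and pick \<open>x \<in> U\<close>. The orbit of \<open>x\<close> consists of the points \<open>s\<^sup>m x\<close>, and
  the space has no isolated points, so some \<open>s\<^sup>m x \<noteq> x\<close> lies in \<open>U\<close>. On the nonempty open set
  \<open>U \<inter> s\<^sup>-\<^sup>m U\<close> conjugation by the reflection gives \<open>s\<^sup>m = s\<^sup>-\<^sup>m\<close>, so the rotation \<open>s\<^sup>2\<^sup>m\<close> fixes it,
  which the first case excludes.\<close>

lemma closure_eq_UNIV_if_meets_open:
  assumes "\<And>U. open U \<Longrightarrow> U \<noteq> {} \<Longrightarrow> U \<inter> S \<noteq> {}"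
  shows "closure S = UNIV"
proof -
  have "- closure S \<inter> S = {}"
    using closure_subset by blast
  then have "- closure S = {}"
    using assms[of "- closure S"] by blast
  then show ?thesis by blast
qed

lemma minimal_action_orbit_meets_open:
  assumes minimal: "\<forall>x. closure (orbit G \<alpha> x) = UNIV"
    and "open U" "U \<noteq> {}"
  obtains g where "g \<in> carrier G" "\<alpha> g x \<in> U"
proof -
  have "U \<inter> closure (orbit G \<alpha> x) \<noteq> {}"
    using minimal \<open>U \<noteq> {}\<close> by simp
  then have "U \<inter> orbit G \<alpha> x \<noteq> {}"
    using open_Int_closure_eq_empty[OF \<open>open U\<close>] by blast
  then obtain g where "g \<in> carrier G" "\<alpha> g x \<in> U"
    unfolding orbit_def by blast
  then show ?thesis
    by (rule that)
qed

lemma minimal_action_invariant_set_eq_UNIV: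
  assumes action: "group_action G UNIV \<alpha>"
    and minimal: "\<forall>x. closure (orbit G \<alpha> x) = UNIV"
    and invariant: "\<And>g x. g \<in> carrier G \<Longrightarrow> x \<in> F \<Longrightarrow> \<alpha> g x \<in> F"
    and U: "open U" "U \<noteq> {}" "U \<subseteq> F"
  shows "F = UNIV"
proof -
  have "y \<in> F" for y
  proof -
    obtain g where g: "g \<in> carrier G" "\<alpha> g y \<in> U"
      using minimal_action_orbit_meets_open[OF minimal U(1,2)] by blast
    have "group G"
      using group_hom.axioms(1)[OF group_action.group_hom[OF action]] .
    then have "inv\<^bsub>G\<^esub> g \<in> carrier G"
      using g(1) by (rule group.inv_closed)
    then have "\<alpha> (inv\<^bsub>G\<^esub> g) (\<alpha> g y) \<in> F"
      using invariant g(2) U(3) by blast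
    then show "y \<in> F"
      using group_action.orbit_sym_aux[OF action g(1) UNIV_I refl] by simp
  qed
  then show ?thesis by blast
qed

lemma minimal_action_finite_orbit_imp_finite:
  fixes \<alpha> :: "'g \<Rightarrow> 'a::t1_space \<Rightarrow> 'a"
  assumes minimal: "\<forall>x. closure (orbit G \<alpha> x) = UNIV"
    and "finite (orbit G \<alpha> x)"
  shows "finite (UNIV :: 'a set)"
proof -
  have "closure (orbit G \<alpha> x) = orbit G \<alpha> x"
    using assms(2) by (simp add: finite_imp_closed)
  then show ?thesis
    using minimal assms(2) by simp
qed

text \<open>The open sets \<open>\<alpha> g -` {x}\<close> cover the space and are singletons or empty, so compactness
  would make the space finite.\<close>

lemma minimal_action_no_isolated_points:
  fixes \<alpha> :: "'g \<Rightarrow> 'a::topological_space \<Rightarrow> 'a" and x :: 'a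
  assumes action: "group_action G UNIV \<alpha>"
    and cont: "\<forall>g \<in> carrier G. continuous_on UNIV (\<alpha> g)"
    and cpt: "compact (UNIV :: 'a set)"
    and inf: "infinite (UNIV :: 'a set)"
    and minimal: "\<forall>x. closure (orbit G \<alpha> x) = UNIV"
  shows "\<not> open {x}"
proof
  assume isolated: "open {x}"
  have cover: "UNIV \<subseteq> (\<Union>g\<in>carrier G. \<alpha> g -` {x})"
  proof
    fix y
    obtain g where "g \<in> carrier G" "\<alpha> g y \<in> {x}"
      using minimal_action_orbit_meets_open[OF minimal isolated] by blast
    then show "y \<in> (\<Union>g\<in>carrier G. \<alpha> g -` {x})" by blast
  qed
  have "open (\<alpha> g -` {x})" if "g \<in> carrier G" for g
    using open_vimage[OF isolated] cont that by blast
  then obtain C where C: "C \<subseteq> carrier G" "finite C" "UNIV \<subseteq> (\<Union>g\<in>C. \<alpha> g -` {x})"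
    using compactE_image[OF cpt _ cover] by blast
  have "finite (\<alpha> g -` {x})" if "g \<in> carrier G" for g
    using group_action.inj_prop[OF action that] by (simp add: finite_vimageI)
  then have "finite (\<Union>g\<in>C. \<alpha> g -` {x})"
    using C(1,2) by blast
  then show False
    using C(3) inf finite_subset by blast
qed

lemma Dinf_carrier [simp]: "carrier Dinf = UNIV"
  by (simp add: Dinf_def)

lemma Dinf_one [simp]: "\<one>\<^bsub>Dinf\<^esub> = (0, False)"
  by (simp add: Dinf_def)

lemma Dinf_mult [simp]: "(n, a) \<otimes>\<^bsub>Dinf\<^esub> (m, b) = (n + (if a then - m else m), a \<noteq> b)"
  by (simp add: Dinf_def)

context
  fixes \<alpha> :: "int \<times> bool \<Rightarrow> 'a \<Rightarrow> 'a"
  assumes action: "group_action Dinf UNIV \<alpha>"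
begin

lemma Dinf_action_mult:
  "\<alpha> (n, a) (\<alpha> (m, b) x) = \<alpha> (n + (if a then - m else m), a \<noteq> b) x"
  using group_action.composition_rule[OF action, of x "(n, a)" "(m, b)"] by simp

lemma Dinf_action_one: "\<alpha> (0, False) x = x"
proof -
  have "\<alpha> (0, False) = (\<lambda>x \<in> UNIV. x)"
    using group_action.id_eq_one[OF action] by simp
  then show ?thesis by simp
qed

lemma Dinf_rotation_fixes_orbit:
  assumes fixed: "\<alpha> (n, False) y = y"
  shows "\<alpha> (n, False) (\<alpha> (k, b) y) = \<alpha> (k, b) y"
proof (cases b)
  case False
  have "\<alpha> (n, False) (\<alpha> (k, False) y) = \<alpha> (k, False) (\<alpha> (n, False) y)"
    by (simp add: Dinf_action_mult add.commute)
  then show ?thesis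
    using False fixed by simp
next
  case True
  have inverse_fix: "\<alpha> (- n, False) y = y"
    using Dinf_action_mult[of "- n" False n False y] Dinf_action_one fixed by simp
  have "\<alpha> (n, False) (\<alpha> (k, True) y) = \<alpha> (k, True) (\<alpha> (- n, False) y)"
    by (simp add: Dinf_action_mult add.commute)
  then show ?thesis
    using True inverse_fix by simp
qed

lemma Dinf_rotation_multiple_trivial:
  assumes trivial: "\<And>y. \<alpha> (n, False) y = y"
  shows "\<alpha> (n * q, False) y = y"
proof (induction q rule: int_induct[where k = 0])
  case base
  then show ?case by (simp add: Dinf_action_one)
next
  case (step1 i)
  have "\<alpha> (n * (i + 1), False) y = \<alpha> (n, False) (\<alpha> (n * i, False) y)"
    by (simp add: Dinf_action_mult algebra_simps)
  then show ?case
    using step1 trivial by simp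
next
  case (step2 i)
  have "\<alpha> (n * i, False) y = \<alpha> (n, False) (\<alpha> (n * (i - 1), False) y)"
    by (simp add: Dinf_action_mult algebra_simps)
  then show ?case
    using step2 trivial by simp
qed

lemma Dinf_trivial_rotation_finite_orbit:
  assumes "n \<noteq> 0" and trivial: "\<And>y. \<alpha> (n, False) y = y"
  shows "finite (orbit Dinf \<alpha> x)"
proof -
  have reduce: "\<alpha> (k, b) x = \<alpha> (k mod n, b) x" for k b
  proof -
    have "\<alpha> (k, b) x = \<alpha> (n * (k div n), False) (\<alpha> (k mod n, b) x)"
      by (simp add: Dinf_action_mult)
    then show ?thesis
      using Dinf_rotation_multiple_trivial[OF trivial] by simp
  qed
  have "orbit Dinf \<alpha> x \<subseteq> (\<lambda>g. \<alpha> g x) ` ({- \<bar>n\<bar>..\<bar>n\<bar>} \<times> UNIV)"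
  proof
    fix z
    assume "z \<in> orbit Dinf \<alpha> x"
    then obtain k b where z: "z = \<alpha> (k, b) x"
      by (auto simp: orbit_def)
    have "k mod n \<in> {- \<bar>n\<bar>..\<bar>n\<bar>}"
      using abs_mod_less[OF \<open>n \<noteq> 0\<close>, of k] by auto
    then show "z \<in> (\<lambda>g. \<alpha> g x) ` ({- \<bar>n\<bar>..\<bar>n\<bar>} \<times> UNIV)"
      using z reduce by force
  qed
  then show ?thesis
    by (rule finite_subset) simp
qed

lemma Dinf_orbit_of_reflection_fixed_point:
  assumes fixed: "\<alpha> (n, True) x = x"
  shows "orbit Dinf \<alpha> x = range (\<lambda>m. \<alpha> (m, False) x)"
proof
  have reflection: "\<alpha> (k, True) x = \<alpha> (k - n, False) x" for k
    using Dinf_action_mult[of "k - n" False n True x] fixed by simp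
  have "\<alpha> (k, c) x \<in> range (\<lambda>m. \<alpha> (m, False) x)" for k c
  proof -
    have "\<alpha> (k, c) x = \<alpha> (if c then k - n else k, False) x"
      using reflection by (cases c) simp_all
    then show ?thesis
      by (rule range_eqI)
  qed
  then show "orbit Dinf \<alpha> x \<subseteq> range (\<lambda>m. \<alpha> (m, False) x)"
    unfolding orbit_def by auto
  show "range (\<lambda>m. \<alpha> (m, False) x) \<subseteq> orbit Dinf \<alpha> x"
    unfolding orbit_def by auto
qed

text \<open>Conjugating \<open>s\<^sup>m\<close> by the reflection \<open>s\<^sup>n t\<close> gives \<open>s\<^sup>-\<^sup>m\<close>.\<close>

lemma Dinf_reflection_fixing_rotated_point:
  assumes "\<alpha> (n, True) y = y" and "\<alpha> (n, True) (\<alpha> (m, False) y) = \<alpha> (m, False) y"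
  shows "\<alpha> (2 * m, False) y = y"
proof -
  have "\<alpha> (m, False) y = \<alpha> (n, True) (\<alpha> (m, False) y)"
    using assms(2) by simp
  also have "\<dots> = \<alpha> (- m, False) (\<alpha> (n, True) y)"
    by (simp add: Dinf_action_mult)
  finally have inverse: "\<alpha> (m, False) y = \<alpha> (- m, False) y"
    using assms(1) by simp
  have "\<alpha> (2 * m, False) y = \<alpha> (m, False) (\<alpha> (m, False) y)"
    by (simp add: Dinf_action_mult)
  also have "\<dots> = \<alpha> (m, False) (\<alpha> (- m, False) y)"
    by (simp only: inverse)
  also have "\<dots> = y"
    by (simp add: Dinf_action_mult Dinf_action_one)
  finally show ?thesis .
qed

end

lemma Dinf_rotation_fixing_open_set_trivial:
  fixes \<alpha> :: "int \<times> bool \<Rightarrow> 'a::topological_space \<Rightarrow> 'a"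
  assumes action: "group_action Dinf UNIV \<alpha>"
    and minimal: "\<forall>x. closure (orbit Dinf \<alpha> x) = UNIV"
    and U: "open U" "U \<noteq> {}" "\<forall>y\<in>U. \<alpha> (n, False) y = y"
  shows "\<alpha> (n, False) y = y"
proof -
  have invariant: "\<alpha> g x \<in> {y. \<alpha> (n, False) y = y}"
    if "x \<in> {y. \<alpha> (n, False) y = y}" for g x
    using that Dinf_rotation_fixes_orbit[OF action] by (cases g) simp
  have "{y. \<alpha> (n, False) y = y} = UNIV"
    using minimal_action_invariant_set_eq_UNIV[OF action minimal invariant U(1,2)] U(3) by blast
  then show ?thesis by blast
qed

lemma Dinf_minimal_rotation_moves_open:
  fixes \<alpha> :: "int \<times> bool \<Rightarrow> 'a::t1_space \<Rightarrow> 'a"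
  assumes action: "group_action Dinf UNIV \<alpha>"
    and inf: "infinite (UNIV :: 'a set)"
    and minimal: "\<forall>x. closure (orbit Dinf \<alpha> x) = UNIV"
    and "n \<noteq> 0" and U: "open U" "U \<noteq> {}"
  shows "\<exists>y\<in>U. \<alpha> (n, False) y \<noteq> y"
proof (rule ccontr)
  assume "\<not> (\<exists>y\<in>U. \<alpha> (n, False) y \<noteq> y)"
  then have "\<alpha> (n, False) y = y" for y
    using Dinf_rotation_fixing_open_set_trivial[OF action minimal U] by blast
  then have "finite (orbit Dinf \<alpha> x)" for x
    using Dinf_trivial_rotation_finite_orbit[OF action \<open>n \<noteq> 0\<close>] by blast
  then show False
    using minimal_action_finite_orbit_imp_finite[OF minimal] inf by blast
qed

lemma Dinf_minimal_reflection_moves_open: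
  fixes \<alpha> :: "int \<times> bool \<Rightarrow> 'a::t1_space \<Rightarrow> 'a"
  assumes action: "group_action Dinf UNIV \<alpha>"
    and cont: "\<forall>g \<in> carrier Dinf. continuous_on UNIV (\<alpha> g)"
    and cpt: "compact (UNIV :: 'a set)"
    and inf: "infinite (UNIV :: 'a set)"
    and minimal: "\<forall>x. closure (orbit Dinf \<alpha> x) = UNIV"
    and U: "open U" "U \<noteq> {}"
  shows "\<exists>y\<in>U. \<alpha> (n, True) y \<noteq> y"
proof (rule ccontr)
  assume "\<not> (\<exists>y\<in>U. \<alpha> (n, True) y \<noteq> y)"
  then have fixed: "\<alpha> (n, True) y = y" if "y \<in> U" for y
    using that by blast
  obtain x where x: "x \<in> U"
    using U(2) by blast
  have "U \<noteq> {x}"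
    using minimal_action_no_isolated_points[OF action cont cpt inf minimal, of x] U(1) by blast
  then have "U - {x} \<noteq> {}"
    using x by blast
  then obtain g where "\<alpha> g x \<in> U - {x}"
    using minimal_action_orbit_meets_open[OF minimal open_Diff[OF U(1) closed_singleton]] by blast
  moreover have "\<alpha> g x \<in> orbit Dinf \<alpha> x"
    unfolding orbit_def Dinf_carrier by blast
  ultimately obtain m where m: "\<alpha> (m, False) x \<in> U" "\<alpha> (m, False) x \<noteq> x"
    unfolding Dinf_orbit_of_reflection_fixed_point[OF action fixed[OF x]] by auto
  have "m \<noteq> 0"
    using m(2) Dinf_action_one[OF action] by auto
  define W where "W = U \<inter> \<alpha> (m, False) -` U"
  have W_open: "open W"
    unfolding W_def using open_vimage[OF U(1)] cont U(1) by auto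
  have W_nonempty: "W \<noteq> {}"
    using x m(1) unfolding W_def by blast
  have W_fixed: "\<alpha> (2 * m, False) y = y" if "y \<in> W" for y
  proof -
    have "y \<in> U" and "\<alpha> (m, False) y \<in> U"
      using that by (simp_all add: W_def)
    then show ?thesis
      by (rule Dinf_reflection_fixing_rotated_point[OF action fixed fixed])
  qed
  have "2 * m \<noteq> 0"
    using \<open>m \<noteq> 0\<close> by simp
  then obtain y where "y \<in> W" and "\<alpha> (2 * m, False) y \<noteq> y"
    using Dinf_minimal_rotation_moves_open[OF action inf minimal _ W_open W_nonempty] by blast
  then show False
    using W_fixed by blast
qed

lemma Dinf_minimal_nontrivial_moves_open:
  fixes \<alpha> :: "int \<times> bool \<Rightarrow> 'a::t1_space \<Rightarrow> 'a"
  assumes action: "group_action Dinf UNIV \<alpha>"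
    and cont: "\<forall>g \<in> carrier Dinf. continuous_on UNIV (\<alpha> g)"
    and cpt: "compact (UNIV :: 'a set)"
    and inf: "infinite (UNIV :: 'a set)"
    and minimal: "\<forall>x. closure (orbit Dinf \<alpha> x) = UNIV"
    and "g \<noteq> \<one>\<^bsub>Dinf\<^esub>" and U: "open U" "U \<noteq> {}"
  shows "\<exists>y\<in>U. \<alpha> g y \<noteq> y"
proof (cases g)
  case (Pair n b)
  show ?thesis
  proof (cases b)
    case True
    then show ?thesis
      using Dinf_minimal_reflection_moves_open[OF action cont cpt inf minimal U] Pair by simp
  next
    case False
    then have "n \<noteq> 0"
      using \<open>g \<noteq> \<one>\<^bsub>Dinf\<^esub>\<close> Pair by simp
    then show ?thesis
      using Dinf_minimal_rotation_moves_open[OF action inf minimal _ U] False Pair by simp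
  qed
qed

theorem proposition2p6:
  fixes \<alpha> :: "int \<times> bool \<Rightarrow> 'a::t2_space \<Rightarrow> 'a"
  assumes action: "group_action Dinf UNIV \<alpha>"
    and cont: "\<forall>g \<in> carrier Dinf. continuous_on UNIV (\<alpha> g)"
    and cpt: "compact (UNIV :: 'a set)"
    and inf: "infinite (UNIV :: 'a set)"
    and minimal: "\<forall>x. closure (orbit Dinf \<alpha> x) = UNIV"
  shows "\<forall>g \<in> carrier Dinf. g \<noteq> \<one>\<^bsub>Dinf\<^esub> \<longrightarrow> closure {x. \<alpha> g x \<noteq> x} = UNIV"
proof (intro ballI impI)
  fix g :: "int \<times> bool"
  assume "g \<noteq> \<one>\<^bsub>Dinf\<^esub>"
  show "closure {x. \<alpha> g x \<noteq> x} = UNIV"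
  proof (rule closure_eq_UNIV_if_meets_open)
    fix U :: "'a set"
    assume "open U" "U \<noteq> {}"
    then show "U \<inter> {x. \<alpha> g x \<noteq> x} \<noteq> {}"
      using Dinf_minimal_nontrivial_moves_open[OF action cont cpt inf minimal \<open>g \<noteq> \<one>\<^bsub>Dinf\<^esub>\<close>]
      by blast
  qed
qed

end
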